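(* Let $(\curlywedge,\curlyvee)$ be the reference pair of a Morse sequence $W$ on a finite simplicial complex $K$, and let $\widehat{W}$ denote the set of simplices that are critical for $W$. If $\kappa \in \widehat{W}$ and $\nu \in K$, then: (1) $\kappa \in \curlywedge(\nu)$ if and only if there exists a $\curlywedge$-path from $\nu$ to $\kappa$; (2) $\kappa \in \curlyvee(\nu)$ if and only if there exists a $\curlyvee$-path from $\kappa$ to $\nu$.
   Context: $K$ is a finite simplicial complex; chains are taken with $\mathbb{Z}_2$ coefficients, so a $p$-chain is a set of $p$-simplices and sums are symmetric differences. For a $p$-simplex $\sigma$, $\partial(\sigma)$ is the set of its $(p-1)$-faces and $\delta(\sigma)$ is the set of $(p+1)$-simplices of $K$ containing $\sigma$; these extend linearly to chains. A Morse sequence $W=\langle \emptyset=K_0,\ldots,K_k=K\rangle$ is a sequence of simplicial complexes in which each $K_i$ is obtained from $K_{i-1}$ either by an elementary filling (adding one simplex $\nu$ that is a facet of $K_i$; then $\nu$ is called critical) or by an elementary expansion (adding $\sigma\subset\tau$ with $\dim\tau=\dim\sigma+1$, where $(\sigma,\tau)$ is a free pair of $K_i$, i.e. $\tau$ is the only face of $K_i$ containing $\sigma$; then $(\sigma,\tau)$ is a regular pair, $\sigma$ is lower regular and $\tau$ is upper regular). $\widehat{W}$ is the set of critical simplices. The reference map $\curlywedge$ and coreference map $\curlyvee$ are the unique maps assigning to each $p$-simplex of $K$ a set (a $\mathbb{Z}_2$-chain) of critical $p$-simplices, extended linearly to chains, such that $\curlywedge(\nu)=\curlyvee(\nu)=\nu$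 for every critical $\nu$; for every upper regular $\tau$, $\curlywedge(\tau)=0$ and $\curlywedge(\partial(\tau))=0$; and for every lower regular $\sigma$, $\curlyvee(\sigma)=0$ and $\curlyvee(\delta(\sigma))=0$. The pair $(\curlywedge,\curlyvee)$ is called the reference pair of $W$. A gradient path in $W$ from $\sigma_0$ to $\sigma_k$ is a sequence $\langle\sigma_0,\tau_0,\ldots,\sigma_{k-1},\tau_{k-1},\sigma_k\rangle$ ($k\ge 0$) of $p$-simplices $\sigma_i$ and $(p+1)$-simplices $\tau_i$ such that each $(\sigma_i,\tau_i)$ is a regular pair of $W$ and $\sigma_{i+1}\in\partial(\tau_i)$ with $\sigma_{i+1}\neq\sigma_i$. A cogradient path in $W$ from $\tau_0$ to $\tau_k$ is a sequence $\langle\tau_0,\sigma_1,\tau_1,\ldots,\sigma_k,\tau_k\rangle$ ($k\ge0$) of $p$-simplices $\tau_i$ and $(p-1)$-simplices $\sigma_i$ such that each $(\sigma_i,\tau_i)$ is a regular pair of $W$ and $\tau_{i-1}\in\delta(\sigma_i)$ with $\tau_i\neq\tau_{i-1}$. A $\curlywedge$-path is a gradient path $\langle\sigma_0,\tau_0,\ldots,\tau_{k-1},\sigma_k\rangle$ such that $\sigma_k\in\curlywedge(\sigma_i)$ for every $i\in[0,k]$. A $\curlyvee$-path is a cogradient path $\langle\tau_0,\sigma_1,\tau_1,\ldots,\sigma_k,\tau_k\rangle$ such that $\tau_0\in\curlyvee(\tau_i)$ for every $i\in[0,k]$. *)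

theory Defs
  imports Main
begin

text \<open>Simplices are finite nonempty vertex sets; a p-simplex has p+1 vertices.
  Chains over Z2 are sets of simplices.\<close>

definition simplicial_complex :: "'a set set \<Rightarrow> bool" where
  "simplicial_complex K \<longleftrightarrow> finite K \<and>
     (\<forall>\<sigma>\<in>K. finite \<sigma> \<and> \<sigma> \<noteq> {}) \<and>
     (\<forall>\<sigma>\<in>K. \<forall>\<tau>. \<tau> \<subseteq> \<sigma> \<and> \<tau> \<noteq> {} \<longrightarrow> \<tau> \<in> K)"

definition bd :: "'a set \<Rightarrow> 'a set set" where
  "bd \<sigma> = {\<sigma> - {v} | v. v \<in> \<sigma> \<and> card \<sigma> \<ge> 2}"

definition cobd :: "'a set set \<Rightarrow> 'a set \<Rightarrow> 'a set set" where
  "cobd K \<sigma> = {\<tau> \<in> K. \<sigma> \<subseteq> \<tau> \<and> card \<tau> = card \<sigma> + 1}"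

text \<open>Linear (Z2) extension of a map from simplices to chains, applied to a chain.\<close>
definition chain_map :: "('a set \<Rightarrow> 'a set set) \<Rightarrow> 'a set set \<Rightarrow> 'a set set" where
  "chain_map f c = {\<kappa>. odd (card {\<sigma> \<in> c. \<kappa> \<in> f \<sigma>})}"

datatype 'a step = Fill "'a set" | Expand "'a set" "'a set"

fun step_simplices :: "'a step \<Rightarrow> 'a set set" where
  "step_simplices (Fill \<nu>) = {\<nu>}"
| "step_simplices (Expand \<sigma> \<tau>) = {\<sigma>, \<tau>}"

definition cpx :: "'a step list \<Rightarrow> nat \<Rightarrow> 'a set set" where
  "cpx W i = (\<Union>s\<in>set (take i W). step_simplices s)"

definition valid_step :: "'a set set \<Rightarrow> 'a set set \<Rightarrow> 'a step \<Rightarrow> bool" where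
  "valid_step Kprev Knew s = (case s of
      Fill \<nu> \<Rightarrow> \<nu> \<notin> Kprev \<and> (\<forall>\<rho>\<in>Knew. \<not> \<nu> \<subset> \<rho>)
    | Expand \<sigma> \<tau> \<Rightarrow> \<sigma> \<subset> \<tau> \<and> card \<tau> = card \<sigma> + 1 \<and> \<sigma> \<notin> Kprev \<and> \<tau> \<notin> Kprev
        \<and> (\<forall>\<rho>\<in>Knew. \<sigma> \<subset> \<rho> \<longrightarrow> \<rho> = \<tau>))"

definition morse_sequence :: "'a set set \<Rightarrow> 'a step list \<Rightarrow> bool" where
  "morse_sequence K W \<longleftrightarrow> simplicial_complex K \<and> cpx W (length W) = K \<and>
     (\<forall>i<length W. simplicial_complex (cpx W (Suc i)) \<and>
                   valid_step (cpx W i) (cpx W (Suc i)) (W ! i))"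

definition critical :: "'a step list \<Rightarrow> 'a set set" where
  "critical W = {\<nu>. Fill \<nu> \<in> set W}"

definition regular_pair :: "'a step list \<Rightarrow> 'a set \<Rightarrow> 'a set \<Rightarrow> bool" where
  "regular_pair W \<sigma> \<tau> \<longleftrightarrow> Expand \<sigma> \<tau> \<in> set W"

definition upper_regular :: "'a step list \<Rightarrow> 'a set set" where
  "upper_regular W = {\<tau>. \<exists>\<sigma>. regular_pair W \<sigma> \<tau>}"

definition lower_regular :: "'a step list \<Rightarrow> 'a set set" where
  "lower_regular W = {\<sigma>. \<exists>\<tau>. regular_pair W \<sigma> \<tau>}"

definition crit_valued :: "'a set set \<Rightarrow> 'a step list \<Rightarrow> ('a set \<Rightarrow> 'a set set) \<Rightarrow> bool" where
  "crit_valued K W r \<longleftrightarrow> (\<forall>\<nu>\<in>K. r \<nu> \<subseteq> critical W \<and> (\<forall>\<kappa>\<in>r \<nu>. card \<kappa> = card \<nu>))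
     \<and> (\<forall>\<nu>\<in>critical W. r \<nu> = {\<nu>})"

definition reference_map :: "'a set set \<Rightarrow> 'a step list \<Rightarrow> ('a set \<Rightarrow> 'a set set) \<Rightarrow> bool" where
  "reference_map K W r \<longleftrightarrow> crit_valued K W r \<and>
     (\<forall>\<tau>\<in>upper_regular W. r \<tau> = {} \<and> chain_map r (bd \<tau>) = {})"

definition coreference_map :: "'a set set \<Rightarrow> 'a step list \<Rightarrow> ('a set \<Rightarrow> 'a set set) \<Rightarrow> bool" where
  "coreference_map K W r \<longleftrightarrow> crit_valued K W r \<and>
     (\<forall>\<sigma>\<in>lower_regular W. r \<sigma> = {} \<and> chain_map r (cobd K \<sigma>) = {})"

text \<open>Gradient path <ss!0, ts!0, ss!1, ..., ts!(k-1), ss!k>.\<close>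
definition gradient_path :: "'a step list \<Rightarrow> 'a set list \<Rightarrow> 'a set list \<Rightarrow> bool" where
  "gradient_path W ss ts \<longleftrightarrow> length ss = Suc (length ts) \<and>
     (\<forall>i<length ts. regular_pair W (ss ! i) (ts ! i) \<and> ss ! Suc i \<in> bd (ts ! i)
                    \<and> ss ! Suc i \<noteq> ss ! i)"

text \<open>Cogradient path <ts!0, ss!0, ts!1, ..., ss!(k-1), ts!k>; ss!i is sigma_(i+1).\<close>
definition cogradient_path :: "'a set set \<Rightarrow> 'a step list \<Rightarrow> 'a set list \<Rightarrow> 'a set list \<Rightarrow> bool" where
  "cogradient_path K W ts ss \<longleftrightarrow> length ts = Suc (length ss) \<and>
     (\<forall>i<length ss. regular_pair W (ss ! i) (ts ! Suc i) \<and> ts ! i \<in> cobd K (ss ! i)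
                    \<and> ts ! Suc i \<noteq> ts ! i)"

definition ref_path :: "'a step list \<Rightarrow> ('a set \<Rightarrow> 'a set set) \<Rightarrow> 'a set \<Rightarrow> 'a set \<Rightarrow> bool" where
  "ref_path W r \<nu> \<kappa> \<longleftrightarrow> (\<exists>ss ts. gradient_path W ss ts \<and> hd ss = \<nu> \<and> last ss = \<kappa>
       \<and> (\<forall>\<sigma>\<in>set ss. \<kappa> \<in> r \<sigma>))"

definition coref_path :: "'a set set \<Rightarrow> 'a step list \<Rightarrow> ('a set \<Rightarrow> 'a set set) \<Rightarrow> 'a set \<Rightarrow> 'a set \<Rightarrow> bool" where
  "coref_path K W r \<kappa> \<nu> \<longleftrightarrow> (\<exists>ts ss. cogradient_path K W ts ss \<and> hd ts = \<kappa> \<and> last ts = \<nu>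
       \<and> (\<forall>\<tau>\<in>set ts. \<kappa> \<in> r \<tau>))"

end

theory Submission
  imports Defs
begin

text \<open>Paths give membership at once, since every simplex of a \<open>\<curlywedge>\<close>-path (\<open>\<curlyvee>\<close>-path)
  carries \<open>\<kappa>\<close> in its image. Conversely, let \<open>\<kappa> \<in> \<curlywedge>(\<nu>)\<close> and induct on the position of
  \<open>\<nu>\<close> in the sequence. A critical \<open>\<nu>\<close> equals \<open>\<kappa>\<close>, and \<open>\<nu>\<close> cannot be upper regular. If
  \<open>(\<nu>, \<tau>)\<close> is a regular pair, \<open>\<curlywedge>(\<partial>(\<tau>)) = 0\<close> means that \<open>\<kappa> \<in> \<curlywedge>(\<sigma>)\<close> for an even
  number of faces \<open>\<sigma>\<close> of \<open>\<tau>\<close>, hence for some face \<open>\<sigma>' \<noteq> \<nu>\<close>. As \<open>K\<^sub>i \<union> {\<nu>, \<tau>}\<close> is a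
  complex, \<open>\<sigma>'\<close> lies in \<open>K\<^sub>i\<close>, i.e. it was added before \<open>\<nu>\<close>, and a \<open>\<curlywedge>\<close>-path from \<open>\<sigma>'\<close>
  extends to one from \<open>\<nu>\<close>. Dually, for \<open>\<kappa> \<in> \<curlyvee>(\<nu>)\<close> with \<open>(\<sigma>, \<nu>)\<close> regular,
  \<open>\<curlyvee>(\<delta>(\<sigma>)) = 0\<close> yields a coface \<open>\<tau>' \<noteq> \<nu>\<close> of \<open>\<sigma>\<close> with \<open>\<kappa> \<in> \<curlyvee>(\<tau>')\<close>; as \<open>(\<sigma>, \<nu>)\<close> is
  free in \<open>K\<^sub>i \<union> {\<sigma>, \<nu>}\<close>, \<open>\<tau>'\<close> is added after \<open>\<nu>\<close>, and we induct backwards along the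
  sequence.\<close>

lemma mem_bd_iff: "\<sigma> \<in> bd \<tau> \<longleftrightarrow> \<sigma> \<noteq> {} \<and> \<sigma> \<subseteq> \<tau> \<and> card \<tau> = Suc (card \<sigma>)"
proof
  assume "\<sigma> \<in> bd \<tau>"
  then obtain v where v: "\<sigma> = \<tau> - {v}" "v \<in> \<tau>" "card \<tau> \<ge> 2"
    unfolding bd_def by blast
  then have card: "card \<sigma> = card \<tau> - 1" by (cases "finite \<tau>") simp_all
  then have "\<sigma> \<noteq> {}" using v(3) by auto
  with v card show "\<sigma> \<noteq> {} \<and> \<sigma> \<subseteq> \<tau> \<and> card \<tau> = Suc (card \<sigma>)" by auto
next
  assume \<sigma>: "\<sigma> \<noteq> {} \<and> \<sigma> \<subseteq> \<tau> \<and> card \<tau> = Suc (card \<sigma>)"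
  then have fin: "finite \<tau>" by (metis card.infinite nat.distinct(1))
  then have "finite \<sigma>" using \<sigma> finite_subset by blast
  then have "card \<sigma> \<noteq> 0" using \<sigma> by simp
  have "\<sigma> \<noteq> \<tau>" using \<sigma> by auto
  then obtain v where v: "v \<in> \<tau>" "v \<notin> \<sigma>" using \<sigma> by blast
  then have "\<sigma> \<subseteq> \<tau> - {v}" using \<sigma> by blast
  moreover have "card (\<tau> - {v}) = card \<sigma>" using \<sigma> v fin by simp
  ultimately have "\<sigma> = \<tau> - {v}" using fin by (simp add: card_subset_eq)
  with v \<sigma> \<open>card \<sigma> \<noteq> 0\<close> show "\<sigma> \<in> bd \<tau>" unfolding bd_def by auto
qed

lemma finite_bd: "finite (bd \<tau>)"
proof (cases "finite \<tau>")
  case True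
  have "bd \<tau> \<subseteq> Pow \<tau>" by (auto simp: mem_bd_iff)
  with True show ?thesis by (simp add: finite_subset)
next
  case False
  then have "bd \<tau> = {}" by (auto simp: mem_bd_iff)
  then show ?thesis by simp
qed

lemma chain_map_empty_imp_other:
  assumes "chain_map r c = {}" "finite c" "\<sigma> \<in> c" "\<kappa> \<in> r \<sigma>"
  obtains \<sigma>' where "\<sigma>' \<in> c" "\<sigma>' \<noteq> \<sigma>" "\<kappa> \<in> r \<sigma>'"
proof (rule ccontr)
  assume "\<not> thesis"
  then have "{\<rho> \<in> c. \<kappa> \<in> r \<rho>} = {\<sigma>}" using assms(3,4) that by blast
  moreover have "even (card {\<rho> \<in> c. \<kappa> \<in> r \<rho>})"
    using assms(1) unfolding chain_map_def by blast
  ultimately show False by simp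
qed

lemma cpx_mono: "i \<le> j \<Longrightarrow> cpx W i \<subseteq> cpx W j"
  unfolding cpx_def using set_take_subset_set_take by fastforce

lemma cpx_Suc: "i < length W \<Longrightarrow> cpx W (Suc i) = cpx W i \<union> step_simplices (W ! i)"
  unfolding cpx_def by (auto simp: take_Suc_conv_app_nth)

lemma cpx_0 [simp]: "cpx W 0 = {}"
  unfolding cpx_def by simp

lemma cpx_subset: "morse_sequence K W \<Longrightarrow> cpx W n \<subseteq> K"
  unfolding morse_sequence_def cpx_def by (auto dest: in_set_takeD)

lemma morse_sequence_simplex_cases:
  assumes "morse_sequence K W" "\<nu> \<in> K"
  obtains (critical) "\<nu> \<in> critical W"
    | (lower) \<tau> where "regular_pair W \<nu> \<tau>"
    | (upper) \<sigma> where "regular_pair W \<sigma> \<nu>"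
proof -
  have "\<nu> \<in> cpx W (length W)" using assms unfolding morse_sequence_def by simp
  then obtain s where s: "s \<in> set W" "\<nu> \<in> step_simplices s" unfolding cpx_def by auto
  show thesis
  proof (cases s)
    case (Fill \<kappa>)
    then show thesis using s that(1) unfolding critical_def by simp
  next
    case (Expand \<sigma> \<tau>)
    then have "\<nu> = \<sigma> \<or> \<nu> = \<tau>" using s(2) by simp
    then show thesis using s(1) Expand that(2,3) unfolding regular_pair_def by blast
  qed
qed

lemma morse_sequence_Expand:
  assumes "morse_sequence K W" "i < length W" "W ! i = Expand \<sigma> \<tau>"
  shows "cpx W (Suc i) = cpx W i \<union> {\<sigma>, \<tau>}" and "\<sigma> \<notin> cpx W i"
    and "\<sigma> \<in> bd \<tau>" and "\<tau> \<in> cobd K \<sigma>"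
proof -
  show cpx: "cpx W (Suc i) = cpx W i \<union> {\<sigma>, \<tau>}" using cpx_Suc[OF assms(2)] assms(3) by simp
  have "valid_step (cpx W i) (cpx W (Suc i)) (W ! i)"
    using assms unfolding morse_sequence_def by blast
  then have step: "\<sigma> \<subset> \<tau>" "card \<tau> = Suc (card \<sigma>)" "\<sigma> \<notin> cpx W i"
    using assms(3) unfolding valid_step_def by auto
  show "\<sigma> \<notin> cpx W i" by (fact step(3))
  have "\<sigma> \<in> K" "\<tau> \<in> K" using cpx cpx_subset[OF assms(1), of "Suc i"] by auto
  then have "\<sigma> \<noteq> {}"
    using assms(1) unfolding morse_sequence_def simplicial_complex_def by blast
  with step show "\<sigma> \<in> bd \<tau>" by (simp add: mem_bd_iff)
  show "\<tau> \<in> cobd K \<sigma>" using step \<open>\<tau> \<in> K\<close> unfolding cobd_def by auto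
qed

lemma regular_pair_imp_Expand:
  assumes "regular_pair W \<sigma> \<tau>"
  obtains i where "i < length W" "W ! i = Expand \<sigma> \<tau>"
  using assms unfolding regular_pair_def by (metis in_set_conv_nth)

lemma Expand_other_face_in_cpx:
  assumes "morse_sequence K W" "i < length W" "W ! i = Expand \<sigma> \<tau>"
    and "\<sigma>' \<in> bd \<tau>" "\<sigma>' \<noteq> \<sigma>"
  shows "\<sigma>' \<in> cpx W i"
proof -
  have "simplicial_complex (cpx W (Suc i))"
    using assms(1,2) unfolding morse_sequence_def by blast
  moreover have "\<tau> \<in> cpx W (Suc i)" using morse_sequence_Expand(1)[OF assms(1-3)] by simp
  ultimately have "\<sigma>' \<in> cpx W (Suc i)"
    using assms(4) unfolding simplicial_complex_def mem_bd_iff by blast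
  moreover have "\<sigma>' \<noteq> \<tau>" using assms(4) by (auto simp: mem_bd_iff)
  ultimately show ?thesis using morse_sequence_Expand(1)[OF assms(1-3)] assms(5) by blast
qed

lemma Expand_other_coface_notin_cpx:
  assumes "morse_sequence K W" "i < length W" "W ! i = Expand \<sigma> \<tau>"
    and "\<tau>' \<in> cobd K \<sigma>" "\<tau>' \<noteq> \<tau>"
  shows "\<tau>' \<notin> cpx W (Suc i)"
proof -
  have "valid_step (cpx W i) (cpx W (Suc i)) (W ! i)"
    using assms(1,2) unfolding morse_sequence_def by blast
  then have "\<forall>\<rho>\<in>cpx W (Suc i). \<sigma> \<subset> \<rho> \<longrightarrow> \<rho> = \<tau>"
    using assms(3) unfolding valid_step_def by simp
  moreover have "\<sigma> \<subset> \<tau>'" using assms(4) unfolding cobd_def by auto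
  ultimately show ?thesis using assms(5) by blast
qed

lemma gradient_path_Cons:
  assumes "gradient_path W ss ts" "regular_pair W \<nu> \<tau>" "hd ss \<in> bd \<tau>" "hd ss \<noteq> \<nu>"
  shows "gradient_path W (\<nu> # ss) (\<tau> # ts)"
proof -
  have "ss \<noteq> []" using assms(1) unfolding gradient_path_def by auto
  then have "ss ! 0 = hd ss" by (simp add: hd_conv_nth)
  with assms show ?thesis unfolding gradient_path_def by (auto simp: nth_Cons split: nat.split)
qed

lemma cogradient_path_snoc:
  assumes "cogradient_path K W ts ss" "regular_pair W \<sigma> \<nu>" "last ts \<in> cobd K \<sigma>" "last ts \<noteq> \<nu>"
  shows "cogradient_path K W (ts @ [\<nu>]) (ss @ [\<sigma>])"
proof -
  have len: "length ts = Suc (length ss)" using assms(1) unfolding cogradient_path_def by simp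
  then have "ts ! length ss = last ts" by (metis diff_Suc_1 last_conv_nth list.size(3) nat.distinct(1))
  with assms len show ?thesis
    unfolding cogradient_path_def by (auto simp: nth_append less_Suc_eq)
qed

lemma ref_path_refl: "\<kappa> \<in> r \<kappa> \<Longrightarrow> ref_path W r \<kappa> \<kappa>"
  unfolding ref_path_def gradient_path_def by (intro exI[of _ "[\<kappa>]"] exI[of _ "[]"]) simp

lemma ref_path_Cons:
  assumes "ref_path W r \<sigma> \<kappa>" "regular_pair W \<nu> \<tau>" "\<sigma> \<in> bd \<tau>" "\<sigma> \<noteq> \<nu>" "\<kappa> \<in> r \<nu>"
  shows "ref_path W r \<nu> \<kappa>"
proof -
  obtain ss ts where p: "gradient_path W ss ts" "hd ss = \<sigma>" "last ss = \<kappa>" "\<forall>\<rho>\<in>set ss. \<kappa> \<in> r \<rho>"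
    using assms(1) unfolding ref_path_def by blast
  then have "ss \<noteq> []" unfolding gradient_path_def by auto
  with p assms(2-5) show ?thesis unfolding ref_path_def
    by (intro exI[of _ "\<nu> # ss"] exI[of _ "\<tau> # ts"]) (simp add: gradient_path_Cons)
qed

lemma ref_path_imp_mem: "ref_path W r \<nu> \<kappa> \<Longrightarrow> \<kappa> \<in> r \<nu>"
  unfolding ref_path_def gradient_path_def by (metis hd_in_set list.size(3) nat.distinct(1))

lemma coref_path_refl: "\<kappa> \<in> r \<kappa> \<Longrightarrow> coref_path K W r \<kappa> \<kappa>"
  unfolding coref_path_def cogradient_path_def by (intro exI[of _ "[\<kappa>]"] exI[of _ "[]"]) simp

lemma coref_path_snoc:
  assumes "coref_path K W r \<kappa> \<tau>" "regular_pair W \<sigma> \<nu>" "\<tau> \<in> cobd K \<sigma>" "\<tau> \<noteq> \<nu>" "\<kappa> \<in> r \<nu>"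
  shows "coref_path K W r \<kappa> \<nu>"
proof -
  obtain ts ss where p: "cogradient_path K W ts ss" "hd ts = \<kappa>" "last ts = \<tau>"
      "\<forall>\<rho>\<in>set ts. \<kappa> \<in> r \<rho>"
    using assms(1) unfolding coref_path_def by blast
  then have "ts \<noteq> []" unfolding cogradient_path_def by auto
  with p assms(2-5) show ?thesis unfolding coref_path_def
    by (intro exI[of _ "ts @ [\<nu>]"] exI[of _ "ss @ [\<sigma>]"]) (simp add: cogradient_path_snoc)
qed

lemma coref_path_imp_mem: "coref_path K W r \<kappa> \<nu> \<Longrightarrow> \<kappa> \<in> r \<nu>"
  unfolding coref_path_def cogradient_path_def by (metis last_in_set list.size(3) nat.distinct(1))

lemma mem_reference_map_imp_ref_path:
  assumes ms: "morse_sequence K W" and up: "reference_map K W up"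
    and "\<nu> \<in> K" "\<kappa> \<in> up \<nu>"
  shows "ref_path W up \<nu> \<kappa>"
proof -
  have "ref_path W up \<nu> \<kappa>" if "\<nu> \<in> cpx W n" "\<kappa> \<in> up \<nu>" for n \<nu>
    using that
  proof (induction n arbitrary: \<nu> rule: less_induct)
    case (less n)
    have "\<nu> \<in> K" using less.prems(1) cpx_subset[OF ms] by blast
    with ms show ?case
    proof (cases rule: morse_sequence_simplex_cases)
      case critical
      then have "\<kappa> = \<nu>"
        using up less.prems(2) unfolding reference_map_def crit_valued_def by auto
      then show ?thesis using less.prems(2) by (simp add: ref_path_refl)
    next
      case (lower \<tau>)
      then obtain i where i: "i < length W" "W ! i = Expand \<nu> \<tau>"
        by (rule regular_pair_imp_Expand)
      have "chain_map up (bd \<tau>) = {}"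
        using up lower unfolding reference_map_def upper_regular_def by blast
      then obtain \<sigma>' where \<sigma>': "\<sigma>' \<in> bd \<tau>" "\<sigma>' \<noteq> \<nu>" "\<kappa> \<in> up \<sigma>'"
        using morse_sequence_Expand(3)[OF ms i] less.prems(2) finite_bd
        by (blast elim: chain_map_empty_imp_other)
      have "\<sigma>' \<in> cpx W i" using Expand_other_face_in_cpx[OF ms i \<sigma>'(1,2)] .
      moreover have "i < n"
        using less.prems(1) morse_sequence_Expand(2)[OF ms i] cpx_mono[of n i W] by fastforce
      ultimately have "ref_path W up \<sigma>' \<kappa>" using less.IH \<sigma>'(3) by blast
      then show ?thesis using lower \<sigma>' less.prems(2) by (blast intro: ref_path_Cons)
    next
      case (upper \<sigma>)
      then have "up \<nu> = {}" using up unfolding reference_map_def upper_regular_def by blast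
      then show ?thesis using less.prems(2) by simp
    qed
  qed
  moreover have "cpx W (length W) = K" using ms unfolding morse_sequence_def by simp
  ultimately show ?thesis using assms(3,4) by blast
qed

lemma mem_coreference_map_imp_coref_path:
  assumes ms: "morse_sequence K W" and down: "coreference_map K W down"
    and "\<nu> \<in> K" "\<kappa> \<in> down \<nu>"
  shows "coref_path K W down \<kappa> \<nu>"
proof -
  have "coref_path K W down \<kappa> \<nu>" if "\<nu> \<in> K" "\<nu> \<notin> cpx W n" "\<kappa> \<in> down \<nu>" for n \<nu>
    using that
  proof (induction "length W - n" arbitrary: n \<nu> rule: less_induct)
    case less
    from ms \<open>\<nu> \<in> K\<close> show ?case
    proof (cases rule: morse_sequence_simplex_cases)
      case critical
      then have "\<kappa> = \<nu>"
        using down less.prems(3) unfolding coreference_map_def crit_valued_def by auto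
      then show ?thesis using less.prems(3) by (simp add: coref_path_refl)
    next
      case (lower \<tau>)
      then have "down \<nu> = {}" using down unfolding coreference_map_def lower_regular_def by blast
      then show ?thesis using less.prems(3) by simp
    next
      case (upper \<sigma>)
      then obtain i where i: "i < length W" "W ! i = Expand \<sigma> \<nu>"
        by (rule regular_pair_imp_Expand)
      have "chain_map down (cobd K \<sigma>) = {}"
        using down upper unfolding coreference_map_def lower_regular_def by blast
      moreover have "finite (cobd K \<sigma>)"
        using ms unfolding morse_sequence_def simplicial_complex_def cobd_def by simp
      ultimately obtain \<tau>' where \<tau>': "\<tau>' \<in> cobd K \<sigma>" "\<tau>' \<noteq> \<nu>" "\<kappa> \<in> down \<tau>'"
        using morse_sequence_Expand(4)[OF ms i] less.prems(3)
        by (blast elim: chain_map_empty_imp_other)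
      have "n \<le> i"
        using less.prems(2) morse_sequence_Expand(1)[OF ms i] cpx_mono[of "Suc i" n W] by fastforce
      then have "length W - Suc i < length W - n" using i(1) by simp
      moreover have "\<tau>' \<in> K" using \<tau>'(1) unfolding cobd_def by simp
      moreover have "\<tau>' \<notin> cpx W (Suc i)" using Expand_other_coface_notin_cpx[OF ms i \<tau>'(1,2)] .
      ultimately have "coref_path K W down \<kappa> \<tau>'" using less.hyps \<tau>'(3) by blast
      then show ?thesis using upper \<tau>' less.prems(3) by (blast intro: coref_path_snoc)
    qed
  qed
  then show ?thesis using assms(3,4) cpx_0 by blast
qed

theorem corollary1:
  fixes K :: "'a set set" and W :: "'a step list"
    and up down :: "'a set \<Rightarrow> 'a set set"
  assumes "morse_sequence K W"
    and "reference_map K W up"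
    and "coreference_map K W down"
    and "\<kappa> \<in> critical W"
    and "\<nu> \<in> K"
  shows "(\<kappa> \<in> up \<nu> \<longleftrightarrow> ref_path W up \<nu> \<kappa>) \<and>
         (\<kappa> \<in> down \<nu> \<longleftrightarrow> coref_path K W down \<kappa> \<nu>)"
  using mem_reference_map_imp_ref_path[OF assms(1,2,5)] ref_path_imp_mem
    mem_coreference_map_imp_coref_path[OF assms(1,3,5)] coref_path_imp_mem
  by blast

end
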